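(* Let $M$ be a smooth oriented $2n$-manifold and $\omega$ a near-positive 2-form on $M$. If $p\in M$ is a point with $\dim K_p=4$, then $\operatorname{rank}(D_{K_p})\le 3$.
   Context: A 2-form $\omega$ on an oriented $2n$-manifold is near-positive if $\omega^n\ge0$ with respect to the orientation. $K_p=\{v\in T_pM:\omega_p(v,\cdot)=0\}$. The intrinsic gradient on the kernel is the linear map $D_{K_p}:K_p\to\Lambda^2K_p^*$, $v\mapsto(\nabla_v\omega)|_{K_p\times K_p}$ for any connection $\nabla$ (independent of the choice). *)

theory Defs
  imports "HOL-Analysis.Analysis" "HOL-Library.Function_Algebras"
begin

text \<open>Local (chart) model: an open set U of R^(2n) = real^'m with CARD('m) = 2n.
A 2-form is given by a skew-symmetric matrix field W; its value at x on (a,b) is a . (W x b).\<close>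

definition form_at :: "(real^'a::finite \<Rightarrow> real^'a^'a) \<Rightarrow> real^'a \<Rightarrow> real^'a \<Rightarrow> real^'a \<Rightarrow> real" where
  "form_at W x a b = a \<bullet> (W x *v b)"

fun Ck_on :: "nat \<Rightarrow> 'a::euclidean_space set \<Rightarrow> ('a \<Rightarrow> 'b::real_normed_vector) \<Rightarrow> bool" where
  "Ck_on 0 U f = continuous_on U f"
| "Ck_on (Suc k) U f =
     (f differentiable_on U \<and> (\<forall>i\<in>Basis. Ck_on k U (\<lambda>x. frechet_derivative f (at x) i)))"

definition smooth_on :: "'a::euclidean_space set \<Rightarrow> ('a \<Rightarrow> 'b::real_normed_vector) \<Rightarrow> bool" where
  "smooth_on U f \<longleftrightarrow> (\<forall>k. Ck_on k U f)"

definition wedge_power_eval :: "('v \<Rightarrow> 'v \<Rightarrow> real) \<Rightarrow> nat \<Rightarrow> (nat \<Rightarrow> 'v) \<Rightarrow> real" where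
  "wedge_power_eval \<omega> n v =
     (1 / 2 ^ n) * (\<Sum>\<sigma> | \<sigma> permutes {..<2*n}.
        of_int (sign \<sigma>) * (\<Prod>i<n. \<omega> (v (\<sigma> (2*i))) (v (\<sigma> (2*i+1)))))"

text \<open>An ordered basis b 0, ..., b (2n-1) of real^'a (it fixes the orientation).\<close>
definition ordered_basis :: "nat \<Rightarrow> (nat \<Rightarrow> real^'a::finite) \<Rightarrow> bool" where
  "ordered_basis N b \<longleftrightarrow> inj_on b {..<N} \<and> independent (b ` {..<N}) \<and> span (b ` {..<N}) = UNIV"

definition near_positive :: "nat \<Rightarrow> (nat \<Rightarrow> real^'a::finite) \<Rightarrow> (real^'a) set \<Rightarrow> (real^'a \<Rightarrow> real^'a^'a) \<Rightarrow> bool" where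
  "near_positive n b U W \<longleftrightarrow> (\<forall>x\<in>U. wedge_power_eval (form_at W x) n b \<ge> 0)"

definition kernel_at :: "(real^'a::finite \<Rightarrow> real^'a^'a) \<Rightarrow> real^'a \<Rightarrow> (real^'a) set" where
  "kernel_at W p = {v. \<forall>w. form_at W p v w = 0}"

text \<open>Intrinsic gradient D_K(v) = (nabla_v omega) restricted to K x K, using the flat
  connection of the chart; elements of Lambda^2 K^* are represented as functions on
  pairs of vectors, extended by 0 outside K x K.\<close>
definition intrinsic_gradient :: "(real^'a::finite \<Rightarrow> real^'a^'a) \<Rightarrow> real^'a \<Rightarrow> real^'a \<Rightarrow> (real^'a \<Rightarrow> real^'a \<Rightarrow> real)" where
  "intrinsic_gradient W p v =
     (\<lambda>a b. if a \<in> kernel_at W p \<and> b \<in> kernel_at W p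
            then a \<bullet> (frechet_derivative W (at p) v *v b) else 0)"

definition fscale :: "real \<Rightarrow> ('v \<Rightarrow> 'v \<Rightarrow> real) \<Rightarrow> ('v \<Rightarrow> 'v \<Rightarrow> real)" where
  "fscale c f = (\<lambda>a b. c * f a b)"

definition intrinsic_gradient_rank :: "(real^'a::finite \<Rightarrow> real^'a^'a) \<Rightarrow> real^'a \<Rightarrow> nat" where
  "intrinsic_gradient_rank W p =
     vector_space.dim fscale (intrinsic_gradient W p ` kernel_at W p)"

end

theory Submission
  imports Defs
begin

text \<open>
  At \<open>p\<close> choose, by elementary operations of total determinant \<open>c\<close> on the oriented basis \<open>b\<close>, a
  Darboux basis \<open>e\<close> of \<open>\<omega>\<^sub>p\<close> whose first four vectors span \<open>K\<^sub>p\<close>. Along a line \<open>p + t v\<close>, splitting off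
  the hyperbolic pairs one at a time gives \<open>\<omega>\<^sup>n(e) = n! Pf(H\<^sub>v) t\<^sup>2 + o(t\<^sup>2)\<close>, where \<open>H\<^sub>v\<close> is the matrix
  of \<open>D\<^sub>K(v)\<close> in the frame \<open>e\<^sub>0, \<dots>, e\<^sub>3\<close>. As \<open>\<omega>\<^sup>n(e) = c \<omega>\<^sup>n(b)\<close> and \<open>\<omega>\<^sup>n(b) \<ge> 0\<close>, we get
  \<open>c Pf(H\<^sub>v) \<ge> 0\<close> for all \<open>v\<close>. The Pfaffian is definite, with opposite signs, on the two 3-dimensional
  halves (self-dual and anti-self-dual) of the skew forms on \<open>\<real>\<^sup>4\<close>. Mapping \<open>v \<in> K\<^sub>p\<close> to the component
  of \<open>H\<^sub>v\<close> in one half has a nonzero kernel since \<open>dim K\<^sub>p = 4\<close>; choosing the half such that the other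
  one has Pfaffian of sign opposite to \<open>c\<close>, every \<open>v\<close> in this kernel has \<open>D\<^sub>K(v) = 0\<close>.
\<close>

section \<open>Alternation and multilinearity of \<open>\<omega>\<^sup>n\<close>\<close>

lemma wedge_power_eval_swap:
  assumes "a < 2*n" "b < 2*n" "a \<noteq> b"
  shows "wedge_power_eval \<alpha> n (v \<circ> Transposition.transpose a b) = - wedge_power_eval \<alpha> n v"
proof -
  let ?t = "Transposition.transpose a b"
  let ?T = "\<lambda>w \<sigma>. of_int (sign \<sigma>) * (\<Prod>i<n. \<alpha> (w (\<sigma> (2*i))) (w (\<sigma> (2*i+1))))"
  have t: "?t permutes {..<2*n}" using assms by (intro permutes_swap_id) auto
  have "(\<Sum>\<sigma> | \<sigma> permutes {..<2*n}. ?T v \<sigma>) = (\<Sum>\<sigma> | \<sigma> permutes {..<2*n}. ?T v (?t \<circ> \<sigma>))"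
    by (rule setum_permutations_compose_left[OF t])
  also have "\<dots> = (\<Sum>\<sigma> | \<sigma> permutes {..<2*n}. - ?T (v \<circ> ?t) \<sigma>)"
  proof (rule sum.cong[OF refl])
    fix \<sigma> assume "\<sigma> \<in> {\<sigma>. \<sigma> permutes {..<2*n}}"
    then have "permutation \<sigma>" using permutation_permutes by blast
    then have "sign (?t \<circ> \<sigma>) = - sign \<sigma>"
      using assms by (simp add: sign_compose permutation_swap_id sign_swap_id)
    then show "?T v (?t \<circ> \<sigma>) = - ?T (v \<circ> ?t) \<sigma>" by simp
  qed
  finally show ?thesis unfolding wedge_power_eval_def by (simp add: sum_negf)
qed

lemma wedge_power_eval_repeated:
  assumes "a < 2*n" "b < 2*n" "a \<noteq> b" "v a = v b"
  shows "wedge_power_eval \<alpha> n v = 0"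
proof -
  have "v \<circ> Transposition.transpose a b = v"
    using assms by (auto simp: fun_eq_iff Transposition.transpose_def)
  with wedge_power_eval_swap[OF assms(1-3), of \<alpha> v] show ?thesis by simp
qed

lemma bilinear_affine_left: "bilinear \<alpha> \<Longrightarrow> \<alpha> (x + c *\<^sub>R y) z = \<alpha> x z + c * \<alpha> y z"
  by (simp add: bilinear_ladd bilinear_lmul)

lemma bilinear_affine_right: "bilinear \<alpha> \<Longrightarrow> \<alpha> z (x + c *\<^sub>R y) = \<alpha> z x + c * \<alpha> z y"
  by (simp add: bilinear_radd bilinear_rmul)

lemma prod_affine_in_one_factor:
  fixes f :: "nat \<Rightarrow> 'v::real_vector \<Rightarrow> real"
  assumes "k \<in> I" "finite I" "\<And>i z. i \<in> I - {k} \<Longrightarrow> f i z = g i"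
    "\<And>x y c. f k (x + c *\<^sub>R y) = f k x + c * f k y"
  shows "(\<Prod>i\<in>I. f i (x + c *\<^sub>R y)) = (\<Prod>i\<in>I. f i x) + c * (\<Prod>i\<in>I. f i y)"
proof -
  have "(\<Prod>i\<in>I. f i z) = f k z * (\<Prod>i\<in>I - {k}. g i)" for z
    using assms by (simp add: prod.remove)
  then show ?thesis using assms(4) by (simp add: algebra_simps)
qed

lemma wedge_power_eval_slot_linear:
  assumes bil: "bilinear \<alpha>" and a: "a < 2*n"
  shows "wedge_power_eval \<alpha> n (v(a := x + c *\<^sub>R y))
       = wedge_power_eval \<alpha> n (v(a := x)) + c * wedge_power_eval \<alpha> n (v(a := y))"
proof -
  let ?F = "\<lambda>\<sigma> i z. \<alpha> ((v(a:=z)) (\<sigma> (2*i))) ((v(a:=z)) (\<sigma> (2*i+1)))"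
  let ?P = "\<lambda>\<sigma> z. \<Prod>i<n. ?F \<sigma> i z"
  have affine: "?P \<sigma> (x + c *\<^sub>R y) = ?P \<sigma> x + c * ?P \<sigma> y" if \<sigma>: "\<sigma> permutes {..<2*n}" for \<sigma>
  proof -
    obtain k where k: "k < 2*n" "\<sigma> k = a"
      using permutes_image[OF \<sigma>] a by (metis imageE lessThan_iff)
    have inj: "inj \<sigma>" using permutes_inj[OF \<sigma>] .
    \<comment> \<open>slot \<open>a\<close> occurs only in the factor of the pair \<open>k div 2\<close>\<close>
    have other: "?F \<sigma> i z = \<alpha> (v (\<sigma> (2*i))) (v (\<sigma> (2*i+1)))" if "i \<noteq> k div 2" for i z
    proof -
      have "2*i \<noteq> k" "2*i+1 \<noteq> k" using that by auto
      then show ?thesis using k inj by (auto simp: inj_eq)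
    qed
    have "k = 2 * (k div 2) \<and> \<sigma> (2 * (k div 2) + 1) \<noteq> a \<or> k = 2 * (k div 2) + 1 \<and> \<sigma> (2 * (k div 2)) \<noteq> a"
      using k inj by (auto simp: inj_eq)
    then have "?F \<sigma> (k div 2) (x' + c' *\<^sub>R y') = ?F \<sigma> (k div 2) x' + c' * ?F \<sigma> (k div 2) y'" for x' y' c'
      using k bil by (auto simp: bilinear_affine_left bilinear_affine_right)
    with other k show ?thesis by (intro prod_affine_in_one_factor[where k="k div 2"]) auto
  qed
  have "(\<Sum>\<sigma> | \<sigma> permutes {..<2*n}. of_int (sign \<sigma>) * ?P \<sigma> (x + c *\<^sub>R y))
      = (\<Sum>\<sigma> | \<sigma> permutes {..<2*n}. of_int (sign \<sigma>) * ?P \<sigma> x + c * (of_int (sign \<sigma>) * ?P \<sigma> y))"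
    using affine by (intro sum.cong) (auto simp: algebra_simps)
  then show ?thesis
    unfolding wedge_power_eval_def by (simp add: sum.distrib sum_distrib_left algebra_simps)
qed

lemma wedge_power_eval_scale:
  assumes "bilinear \<alpha>" "a < 2*n"
  shows "wedge_power_eval \<alpha> n (v(a := c *\<^sub>R v a)) = c * wedge_power_eval \<alpha> n v"
proof -
  have "wedge_power_eval \<alpha> n (v(a := 0)) = 0"
    using wedge_power_eval_slot_linear[OF assms, of v 0 1 0] by simp
  then show ?thesis
    using wedge_power_eval_slot_linear[OF assms, of v 0 c "v a"] by simp
qed

lemma wedge_power_eval_shear:
  assumes "bilinear \<alpha>" "a < 2*n" "b < 2*n" "a \<noteq> b"
  shows "wedge_power_eval \<alpha> n (v(a := v a + c *\<^sub>R v b)) = wedge_power_eval \<alpha> n v"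
proof -
  have "wedge_power_eval \<alpha> n (v(a := v b)) = 0"
    by (rule wedge_power_eval_repeated[of a n b]) (use assms in auto)
  then show ?thesis using wedge_power_eval_slot_linear[OF assms(1,2), of v "v a" c "v b"] by simp
qed

section \<open>Elementary changes of frame\<close>

inductive elementary_transform :: "nat \<Rightarrow> (nat \<Rightarrow> 'v::real_vector) \<Rightarrow> (nat \<Rightarrow> 'v) \<Rightarrow> real \<Rightarrow> bool"
  for N v where
  ident: "elementary_transform N v v 1"
| swap: "elementary_transform N v w c \<Longrightarrow> a < N \<Longrightarrow> b < N \<Longrightarrow> a \<noteq> b \<Longrightarrow>
    elementary_transform N v (w \<circ> Transposition.transpose a b) (- c)"
| scale: "elementary_transform N v w c \<Longrightarrow> a < N \<Longrightarrow> s \<noteq> 0 \<Longrightarrow>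
    elementary_transform N v (w(a := s *\<^sub>R w a)) (s * c)"
| shear: "elementary_transform N v w c \<Longrightarrow> a < N \<Longrightarrow> b < N \<Longrightarrow> a \<noteq> b \<Longrightarrow>
    elementary_transform N v (w(a := w a + s *\<^sub>R w b)) c"

lemma elementary_transform_factor_nonzero: "elementary_transform N v w c \<Longrightarrow> c \<noteq> 0"
  by (induction rule: elementary_transform.induct) auto

lemma elementary_transform_fixes: "elementary_transform N v w c \<Longrightarrow> N \<le> k \<Longrightarrow> w k = v k"
  by (induction rule: elementary_transform.induct) (auto simp: Transposition.transpose_def)

lemma elementary_transform_mono: "elementary_transform N v w c \<Longrightarrow> N \<le> M \<Longrightarrow> elementary_transform M v w c"
  by (induction rule: elementary_transform.induct) (auto intro: elementary_transform.intros)

lemma elementary_transform_trans: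
  "elementary_transform N w u d \<Longrightarrow> elementary_transform N v w c \<Longrightarrow> elementary_transform N v u (d * c)"
proof (induction rule: elementary_transform.induct)
  case (swap w' c' a b)
  then show ?case using elementary_transform.swap[OF swap.IH[OF swap.prems] swap.hyps(2-4)] by (simp add: comp_def)
next
  case (scale w' c' a s)
  then show ?case using elementary_transform.scale[OF scale.IH[OF scale.prems] scale.hyps(2-3)]
    by (simp add: mult.assoc fun_upd_def)
qed (auto intro: elementary_transform.intros)

lemma elementary_transform_swap_exists:
  "elementary_transform N v w c \<Longrightarrow> a < N \<Longrightarrow> b < N \<Longrightarrow>
    \<exists>c'. elementary_transform N v (w \<circ> Transposition.transpose a b) c'"
  by (cases "a = b") (auto intro: elementary_transform.swap)

lemma elementary_transform_shear_below:
  assumes "elementary_transform N v w c" "p < N" "q < N" "p \<noteq> q"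
  shows "r \<le> p \<Longrightarrow> r \<le> q \<Longrightarrow>
    elementary_transform N v (\<lambda>k. if k < r then w k + f k *\<^sub>R w p + g k *\<^sub>R w q else w k) c"
proof (induction r)
  case 0
  then show ?case using assms by simp
next
  case (Suc r)
  define u where "u = (\<lambda>k. if k < r then w k + f k *\<^sub>R w p + g k *\<^sub>R w q else w k)"
  define u1 where "u1 = u(r := u r + f r *\<^sub>R u p)"
  have "elementary_transform N v u c" using Suc by (simp add: u_def)
  then have "elementary_transform N v u1 c"
    unfolding u1_def by (rule elementary_transform.shear) (use Suc.prems assms in auto)
  then have "elementary_transform N v (u1(r := u1 r + g r *\<^sub>R u1 q)) c"
    by (rule elementary_transform.shear) (use Suc.prems assms in auto)
  moreover have "u1(r := u1 r + g r *\<^sub>R u1 q)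
      = (\<lambda>k. if k < Suc r then w k + f k *\<^sub>R w p + g k *\<^sub>R w q else w k)"
    using Suc.prems unfolding u1_def u_def by (auto simp: fun_eq_iff)
  ultimately show ?case by simp
qed

lemma wedge_power_eval_elementary_transform:
  assumes "elementary_transform N v w c" "N \<le> 2*n" "bilinear \<alpha>"
  shows "wedge_power_eval \<alpha> n w = c * wedge_power_eval \<alpha> n v"
  using assms(1)
proof (induction rule: elementary_transform.induct)
  case (swap w c a b)
  then show ?case using wedge_power_eval_swap[of a n b \<alpha> w] assms(2) by (simp add: comp_def)
next
  case (scale w c a s)
  then show ?case using wedge_power_eval_scale[OF assms(3), of a n w s] assms(2) by (simp add: fun_upd_def)
next
  case (shear w c a b s)
  then show ?case using wedge_power_eval_shear[OF assms(3), of a n b w s] assms(2) by (simp add: fun_upd_def)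
qed simp

lemma span_image_fun_upd:
  assumes "a \<in> I" "x \<in> span (w ` I)" "w a \<in> span ((w(a := x)) ` I)"
  shows "span ((w(a := x)) ` I) = span (w ` I)"
  unfolding span_eq
proof
  show "(w(a := x)) ` I \<subseteq> span (w ` I)"
    using assms(2) by (auto intro: span_base)
  show "w ` I \<subseteq> span ((w(a := x)) ` I)"
  proof
    fix y assume "y \<in> w ` I"
    then obtain k where "k \<in> I" "y = w k" by auto
    then show "y \<in> span ((w(a := x)) ` I)"
      using assms(3) by (cases "k = a") (auto intro!: span_base image_eqI[of _ _ k])
  qed
qed

lemma span_elementary_transform:
  "elementary_transform N v w c \<Longrightarrow> span (w ` {..<N}) = span (v ` {..<N})"
proof (induction rule: elementary_transform.induct)
  case (swap w c a b)
  have "Transposition.transpose a b ` {..<N} = {..<N}"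
    using permutes_image[OF permutes_swap_id[of a "{..<N}" b]] swap.hyps by simp
  then have "(w \<circ> Transposition.transpose a b) ` {..<N} = w ` {..<N}"
    by (simp only: image_comp[symmetric])
  then show ?case using swap.IH by simp
next
  case (scale w c a s)
  have "(1/s) *\<^sub>R (s *\<^sub>R w a) \<in> span ((w(a := s *\<^sub>R w a)) ` {..<N})"
    using scale.hyps by (intro span_scale span_base) (auto intro!: image_eqI[of _ _ a])
  then have "span ((w(a := s *\<^sub>R w a)) ` {..<N}) = span (w ` {..<N})"
    using scale.hyps by (intro span_image_fun_upd) (auto intro: span_scale span_base)
  then show ?case using scale.IH by simp
next
  case (shear w c a b s)
  let ?w' = "w(a := w a + s *\<^sub>R w b)"
  have "?w' a - s *\<^sub>R ?w' b \<in> span (?w' ` {..<N})"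
    using shear.hyps by (intro span_diff span_scale span_base) auto
  then have "span (?w' ` {..<N}) = span (w ` {..<N})"
    using shear.hyps by (intro span_image_fun_upd) (auto intro: span_add span_scale span_base)
  then show ?case using shear.IH by simp
qed simp

lemma elementary_transform_orthogonal:
  assumes "bilinear \<alpha>" "elementary_transform N v w c" "\<And>i. i < N \<Longrightarrow> \<alpha> (v i) z = 0" "j < N"
  shows "\<alpha> (w j) z = 0"
proof -
  have wj: "w j \<in> span (v ` {..<N})"
    using assms(4) span_elementary_transform[OF assms(2)] span_base[of "w j" "w ` {..<N}"] by auto
  have lin: "linear (\<lambda>x. \<alpha> x z)" using assms(1) unfolding bilinear_def by blast
  show ?thesis by (rule real_vector.linear_eq_0_on_span[OF lin _ wj]) (use assms(3) in auto)
qed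

section \<open>Darboux normal form\<close>

text \<open>Gram matrix of a Darboux basis whose first \<open>s\<close> members span the kernel.\<close>

definition darboux_form :: "nat \<Rightarrow> nat \<Rightarrow> nat \<Rightarrow> real" where
  "darboux_form s j l =
     (if s \<le> j \<and> even j \<and> l = j+1 then 1 else if s \<le> l \<and> even l \<and> j = l+1 then -1 else 0)"

lemma darboux_form_last_pair:
  assumes "s \<le> 2*k"
  shows "j < 2*k \<Longrightarrow> darboux_form s j (2*k) = 0" "j < 2*k \<Longrightarrow> darboux_form s j (2*k+1) = 0"
    "j < 2*k \<Longrightarrow> darboux_form s (2*k) j = 0" "j < 2*k \<Longrightarrow> darboux_form s (2*k+1) j = 0"
    "darboux_form s (2*k) (2*k+1) = 1" "darboux_form s (2*k+1) (2*k) = -1"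
    "darboux_form s (2*k) (2*k) = 0" "darboux_form s (2*k+1) (2*k+1) = 0"
  using assms unfolding darboux_form_def by auto presburger+

text \<open>For \<open>\<alpha> P Q \<noteq> 0\<close>: the projection along the span of \<open>P\<close> and \<open>Q\<close> onto its
  \<open>\<alpha>\<close>-orthogonal complement.\<close>

definition skew_compl_proj :: "('v \<Rightarrow> 'v \<Rightarrow> real) \<Rightarrow> 'v \<Rightarrow> 'v \<Rightarrow> 'v \<Rightarrow> 'v::real_vector" where
  "skew_compl_proj \<alpha> P Q x = x + (- \<alpha> x Q / \<alpha> P Q) *\<^sub>R P + (\<alpha> x P / \<alpha> P Q) *\<^sub>R Q"

lemma skew_compl_proj_orthogonal:
  assumes bil: "bilinear \<alpha>" and skew: "\<And>x y. \<alpha> x y = - \<alpha> y x" and "\<alpha> P Q \<noteq> 0"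
  shows "\<alpha> (skew_compl_proj \<alpha> P Q x) P = 0" "\<alpha> (skew_compl_proj \<alpha> P Q x) Q = 0"
proof -
  have "\<alpha> P P = 0" "\<alpha> Q Q = 0" "\<alpha> Q P = - \<alpha> P Q"
    using skew[of P P] skew[of Q Q] skew[of Q P] by simp_all
  then show "\<alpha> (skew_compl_proj \<alpha> P Q x) P = 0" "\<alpha> (skew_compl_proj \<alpha> P Q x) Q = 0"
    unfolding skew_compl_proj_def bilinear_affine_left[OF bil] using assms(3) by (simp_all add: field_simps)
qed

lemma skew_compl_proj_form:
  assumes bil: "bilinear \<alpha>" and skew: "\<And>x y. \<alpha> x y = - \<alpha> y x"
  shows "\<alpha> (skew_compl_proj \<alpha> P Q x) (skew_compl_proj \<alpha> P Q y)
       = \<alpha> x y + (\<alpha> x Q * \<alpha> y P - \<alpha> x P * \<alpha> y Q) / \<alpha> P Q"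
proof (cases "\<alpha> P Q = 0")
  case False
  have "\<alpha> P P = 0" "\<alpha> Q Q = 0" "\<alpha> Q P = - \<alpha> P Q" "\<alpha> P y = - \<alpha> y P" "\<alpha> Q y = - \<alpha> y Q"
    using skew[of P P] skew[of Q Q] skew[of Q P] skew[of P y] skew[of Q y] by simp_all
  then show ?thesis
    unfolding skew_compl_proj_def bilinear_affine_left[OF bil] bilinear_affine_right[OF bil]
    using False by (simp add: field_simps)
qed (simp add: skew_compl_proj_def)

text \<open>One step of the symplectic Gram--Schmidt process.\<close>

lemma darboux_split_pair:
  fixes \<alpha> :: "'v::real_vector \<Rightarrow> 'v \<Rightarrow> real"
  assumes bil: "bilinear \<alpha>" and skew: "\<And>x y. \<alpha> x y = - \<alpha> y x"
    and jl: "j0 < 2*k+2" "l0 < 2*k+2" "\<alpha> (v j0) (v l0) \<noteq> 0"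
  obtains u c where "elementary_transform (2*k+2) v u c" "\<alpha> (u (2*k)) (u (2*k+1)) = 1"
    "\<And>i. i < 2*k \<Longrightarrow> \<alpha> (u i) (u (2*k)) = 0 \<and> \<alpha> (u i) (u (2*k+1)) = 0"
proof -
  define N P Q where "N = 2*k+2" and "P = 2*k" and "Q = 2*k+1"
  have PQ: "P < N" "Q < N" "P \<noteq> Q" unfolding N_def P_def Q_def by auto
  have "\<alpha> x x = 0" for x using skew[of x x] by simp
  then have "j0 \<noteq> l0" using jl by auto
  define j1 where "j1 = (if j0 = Q then l0 else j0)"
  define u1 where "u1 = v \<circ> Transposition.transpose l0 Q \<circ> Transposition.transpose j1 P"
  obtain c0 where "elementary_transform N v (v \<circ> Transposition.transpose l0 Q) c0"
    using elementary_transform_swap_exists[OF elementary_transform.ident] jl PQ unfolding N_def by blast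
  moreover have "j1 < N" using jl unfolding j1_def N_def by simp
  ultimately obtain c1 where o1: "elementary_transform N v u1 c1"
    using elementary_transform_swap_exists PQ unfolding u1_def by blast
  have u1PQ: "u1 P = v j0" "u1 Q = v l0"
    unfolding u1_def j1_def using jl \<open>j0 \<noteq> l0\<close> PQ by (auto simp: Transposition.transpose_def)
  define d where "d = \<alpha> (u1 P) (u1 Q)"
  have d: "d \<noteq> 0" unfolding d_def u1PQ using jl by simp
  define u2 where "u2 = u1(Q := (1/d) *\<^sub>R u1 Q)"
  have o2: "elementary_transform N v u2 ((1/d) * c1)"
    unfolding u2_def by (rule elementary_transform.scale[OF o1 PQ(2)]) (use d in simp)
  have u2PQ: "\<alpha> (u2 P) (u2 Q) = 1"
    unfolding u2_def using PQ d bil by (simp add: bilinear_rmul d_def)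
  define u3 where "u3 k' = (if k' < P then skew_compl_proj \<alpha> (u2 P) (u2 Q) (u2 k') else u2 k')" for k'
  have "elementary_transform N v u3 ((1/d) * c1)"
    unfolding u3_def skew_compl_proj_def
    by (rule elementary_transform_shear_below[OF o2 PQ]) (auto simp: P_def Q_def)
  moreover have "u3 P = u2 P" "u3 Q = u2 Q" unfolding u3_def P_def Q_def by auto
  moreover have "\<alpha> (u3 i) (u3 P) = 0 \<and> \<alpha> (u3 i) (u3 Q) = 0" if "i < P" for i
    using that skew_compl_proj_orthogonal[OF bil skew] u2PQ calculation(2,3) unfolding u3_def by auto
  ultimately show ?thesis using that u2PQ unfolding N_def P_def Q_def by auto
qed

lemma darboux_form_extend:
  fixes \<alpha> :: "'v::real_vector \<Rightarrow> 'v \<Rightarrow> real"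
  assumes skew: "\<And>x y. \<alpha> x y = - \<alpha> y x" and s: "s \<le> 2*k"
    and old: "\<And>j l. j < 2*k \<Longrightarrow> l < 2*k \<Longrightarrow> \<alpha> (w j) (w l) = darboux_form s j l"
    and pair: "\<alpha> (w (2*k)) (w (2*k+1)) = 1"
    and orth: "\<And>j. j < 2*k \<Longrightarrow> \<alpha> (w j) (w (2*k)) = 0 \<and> \<alpha> (w j) (w (2*k+1)) = 0"
    and jl: "j < 2*k+2" "l < 2*k+2"
  shows "\<alpha> (w j) (w l) = darboux_form s j l"
proof -
  have diag: "\<alpha> x x = 0" for x using skew[of x x] by simp
  have "j < 2*k \<or> j = 2*k \<or> j = 2*k+1" "l < 2*k \<or> l = 2*k \<or> l = 2*k+1" using jl by auto
  then show ?thesis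
    using old orth[of j] orth[of l] pair diag darboux_form_last_pair[OF s]
      skew[of "w (2*k)" "w l"] skew[of "w (2*k+1)" "w l"] skew[of "w (2*k+1)" "w (2*k)"]
    by (elim disjE) simp_all
qed

lemma darboux_normal_form:
  fixes \<alpha> :: "'v::real_vector \<Rightarrow> 'v \<Rightarrow> real"
  assumes bil: "bilinear \<alpha>" and skew: "\<And>x y. \<alpha> x y = - \<alpha> y x"
  shows "\<exists>w c r. r \<le> k \<and> elementary_transform (2*k) v w c \<and>
           (\<forall>j<2*k. \<forall>l<2*k. \<alpha> (w j) (w l) = darboux_form (2*k - 2*r) j l)"
proof (induction k arbitrary: v)
  case 0
  show ?case using elementary_transform.ident[of 0 v] by (intro exI[of _ v] exI[of _ 1] exI[of _ 0]) simp
next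
  case (Suc k)
  show ?case
  proof (cases "\<forall>j<2*k+2. \<forall>l<2*k+2. \<alpha> (v j) (v l) = 0")
    case True
    then show ?thesis using elementary_transform.ident[of "2 * Suc k" v]
      by (intro exI[of _ v] exI[of _ 1] exI[of _ 0]) (simp add: darboux_form_def)
  next
    case False
    then obtain j0 l0 where jl: "j0 < 2*k+2" "l0 < 2*k+2" "\<alpha> (v j0) (v l0) \<noteq> 0" by auto
    obtain u c where u: "elementary_transform (2*k+2) v u c" "\<alpha> (u (2*k)) (u (2*k+1)) = 1"
      and u_orth: "\<And>i. i < 2*k \<Longrightarrow> \<alpha> (u i) (u (2*k)) = 0 \<and> \<alpha> (u i) (u (2*k+1)) = 0"
      by (rule darboux_split_pair[OF bil skew jl]) (rule that)
    obtain w c' r where r: "r \<le> k" and w: "elementary_transform (2*k) u w c'"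
      and w_form: "\<forall>j<2*k. \<forall>l<2*k. \<alpha> (w j) (w l) = darboux_form (2*k - 2*r) j l"
      using Suc.IH[of u] by auto
    have w_pair: "w (2*k) = u (2*k)" "w (2*k+1) = u (2*k+1)"
      using elementary_transform_fixes[OF w] by auto
    have w_orth: "\<alpha> (w j) (w (2*k)) = 0 \<and> \<alpha> (w j) (w (2*k+1)) = 0" if "j < 2*k" for j
    proof -
      have "\<alpha> (w j) (u (2*k)) = 0" "\<alpha> (w j) (u (2*k+1)) = 0"
        by (rule elementary_transform_orthogonal[OF bil w _ that]; use u_orth in simp)+
      then show ?thesis unfolding w_pair by simp
    qed
    have "elementary_transform (2 * Suc k) v w (c' * c)"
      using elementary_transform_trans[OF elementary_transform_mono[OF w] u(1)] by simp
    moreover have "\<alpha> (w j) (w l) = darboux_form (2 * Suc k - 2 * Suc r) j l"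
      if "j < 2 * Suc k" "l < 2 * Suc k" for j l
    proof -
      have "\<alpha> (w j) (w l) = darboux_form (2*k - 2*r) j l"
        by (rule darboux_form_extend[OF skew _ _ _ w_orth]) (use w_form w_pair u(2) that in auto)
      then show ?thesis by simp
    qed
    ultimately show ?thesis
      using r by (intro exI[of _ w] exI[of _ "c' * c"] exI[of _ "Suc r"]) simp
  qed
qed

section \<open>Splitting off a hyperbolic pair\<close>

definition pfaffian_term :: "('v \<Rightarrow> 'v \<Rightarrow> real) \<Rightarrow> nat \<Rightarrow> (nat \<Rightarrow> 'v) \<Rightarrow> (nat \<Rightarrow> nat) \<Rightarrow> real" where
  "pfaffian_term \<alpha> n v \<sigma> = of_int (sign \<sigma>) * (\<Prod>i<n. \<alpha> (v (\<sigma> (2*i))) (v (\<sigma> (2*i+1))))"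

lemma wedge_power_eval_eq_sum_pfaffian_term:
  "wedge_power_eval \<alpha> n v = (1/2^n) * (\<Sum>\<sigma> | \<sigma> permutes {..<2*n}. pfaffian_term \<alpha> n v \<sigma>)"
  unfolding wedge_power_eval_def pfaffian_term_def ..

definition perms_onto_last_pair :: "nat \<Rightarrow> nat \<Rightarrow> (nat \<Rightarrow> nat) set" where
  "perms_onto_last_pair n i = {\<sigma>. \<sigma> permutes {..<2 * Suc n} \<and>
     (\<sigma> (2*i) = 2*n \<and> \<sigma> (2*i+1) = 2*n+1 \<or> \<sigma> (2*i) = 2*n+1 \<and> \<sigma> (2*i+1) = 2*n)}"

lemma perms_onto_last_pair_disjoint:
  assumes "i \<noteq> j"
  shows "perms_onto_last_pair n i \<inter> perms_onto_last_pair n j = {}"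
proof (rule ccontr)
  assume "perms_onto_last_pair n i \<inter> perms_onto_last_pair n j \<noteq> {}"
  then obtain \<sigma> where \<sigma>: "\<sigma> \<in> perms_onto_last_pair n i" "\<sigma> \<in> perms_onto_last_pair n j" by blast
  then have "\<sigma> permutes {..<2 * Suc n}" unfolding perms_onto_last_pair_def by simp
  then have "inj \<sigma>" by (rule permutes_inj)
  moreover have "\<sigma> (2*j) = \<sigma> (2*i) \<or> \<sigma> (2*j) = \<sigma> (2*i+1)"
    using \<sigma> unfolding perms_onto_last_pair_def by auto
  ultimately have "2*j = 2*i \<or> 2*j = 2*i+1" by (simp add: inj_eq)
  then show False using assms by presburger
qed

lemma pfaffian_term_vanishes:
  assumes skew: "\<And>x y. \<alpha> x y = - \<alpha> y x"
    and orth: "\<And>j. j < 2*n \<Longrightarrow> \<alpha> (v j) (v (2*n)) = 0"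
    and \<sigma>: "\<sigma> permutes {..<2 * Suc n}" "\<And>i. i < Suc n \<Longrightarrow> \<sigma> \<notin> perms_onto_last_pair n i"
  shows "pfaffian_term \<alpha> (Suc n) v \<sigma> = 0"
proof -
  have inj: "inj \<sigma>" using permutes_inj[OF \<sigma>(1)] .
  have "2*n \<in> \<sigma> ` {..<2 * Suc n}" using permutes_image[OF \<sigma>(1)] by simp
  then obtain k where k: "k < 2 * Suc n" "\<sigma> k = 2*n" by auto
  define i where "i = k div 2"
  have i: "i < Suc n" using k unfolding i_def by auto
  define m where "m = (if even k then 2*i+1 else 2*i)"
  have k_m: "k = 2*i \<and> m = 2*i+1 \<or> k = 2*i+1 \<and> m = 2*i" unfolding m_def i_def by presburger
  have "\<sigma> m \<noteq> \<sigma> k" using inj k_m by (auto simp: inj_eq)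
  then have "\<sigma> m \<noteq> 2*n" using k by simp
  moreover have "\<sigma> m \<noteq> 2*n+1" using \<sigma>(2)[OF i] \<sigma>(1) k k_m unfolding perms_onto_last_pair_def by auto
  moreover have "m < 2 * Suc n" using k_m i by auto
  then have "\<sigma> m < 2 * Suc n" using permutes_in_image[OF \<sigma>(1)] by simp
  ultimately have "\<alpha> (v (\<sigma> m)) (v (2*n)) = 0" using orth by simp
  then have "\<alpha> (v (\<sigma> (2*i))) (v (\<sigma> (2*i+1))) = 0"
    using k k_m skew[of "v (2*n)" "v (\<sigma> m)"] by auto
  then have "(\<Prod>i<Suc n. \<alpha> (v (\<sigma> (2*i))) (v (\<sigma> (2*i+1)))) = 0"
    using i by (intro prod_zero) auto
  then show ?thesis unfolding pfaffian_term_def by simp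
qed

lemma pfaffian_term_swap_pairs:
  assumes i: "i < Suc n" and \<sigma>: "\<sigma> permutes {..<2 * Suc n}"
  defines "\<rho> \<equiv> Transposition.transpose (2*i) (2*n) \<circ> Transposition.transpose (2*i+1) (2*n+1)"
  shows "pfaffian_term \<alpha> (Suc n) v (\<sigma> \<circ> \<rho>) = pfaffian_term \<alpha> (Suc n) v \<sigma>"
proof -
  have "sign \<rho> = 1"
    unfolding \<rho>_def by (simp add: sign_compose permutation_swap_id sign_swap_id)
  moreover have "permutation \<rho>" "permutation \<sigma>"
    unfolding \<rho>_def using \<sigma> permutation_permutes by (auto simp: permutation_compose permutation_swap_id)
  ultimately have sign: "sign (\<sigma> \<circ> \<rho>) = sign \<sigma>" by (simp add: sign_compose)
  define G where "G i' = \<alpha> (v (\<sigma> (2*i'))) (v (\<sigma> (2*i'+1)))" for i'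
  have "Transposition.transpose i n permutes {..<Suc n}" using i by (intro permutes_swap_id) auto
  then have "(\<Prod>i'<Suc n. (G \<circ> Transposition.transpose i n) i') = (\<Prod>i'<Suc n. G i')"
    by (rule prod.permute[symmetric])
  moreover have "\<rho> (2*i') = 2 * Transposition.transpose i n i'"
    "\<rho> (Suc (2*i')) = Suc (2 * Transposition.transpose i n i')" for i'
    unfolding \<rho>_def by (auto simp: Transposition.transpose_def)
  ultimately show ?thesis unfolding pfaffian_term_def sign by (simp add: G_def)
qed

lemma sum_perms_onto_last_pair_eq:
  assumes i: "i < Suc n"
  shows "sum (pfaffian_term \<alpha> (Suc n) v) (perms_onto_last_pair n i)
       = sum (pfaffian_term \<alpha> (Suc n) v) (perms_onto_last_pair n n)"
proof -
  define \<rho> where "\<rho> = Transposition.transpose (2*i) (2*n) \<circ> Transposition.transpose (2*i+1) (2*n+1)"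
  have \<rho>: "\<rho> permutes {..<2 * Suc n}"
    unfolding \<rho>_def using i by (intro permutes_compose permutes_swap_id) auto
  have "\<rho> \<circ> \<rho> = id"
    unfolding \<rho>_def by (auto simp: Transposition.transpose_def fun_eq_iff; presburger)
  then have \<rho>\<rho>: "\<sigma> \<circ> \<rho> \<circ> \<rho> = \<sigma>" for \<sigma> :: "nat \<Rightarrow> nat" by (simp add: comp_assoc)
  have "\<rho> (2*n) = 2*i" "\<rho> (2*n+1) = 2*i+1" "\<rho> (2*i) = 2*n" "\<rho> (2*i+1) = 2*n+1"
    unfolding \<rho>_def by (auto simp: Transposition.transpose_def) presburger+
  then show ?thesis
    using \<rho>\<rho> pfaffian_term_swap_pairs[OF i, folded \<rho>_def] permutes_compose[OF \<rho>]
    by (intro sum.reindex_bij_witness[where i="\<lambda>\<sigma>. \<sigma> \<circ> \<rho>" and j="\<lambda>\<sigma>. \<sigma> \<circ> \<rho>"])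
      (auto simp: perms_onto_last_pair_def)
qed

lemma permutes_fixing_last_pair:
  "{\<sigma>. \<sigma> permutes {..<2*n}} = {\<sigma>. \<sigma> permutes {..<2 * Suc n} \<and> \<sigma> (2*n) = 2*n \<and> \<sigma> (2*n+1) = 2*n+1}"
proof safe
  fix \<sigma> :: "nat \<Rightarrow> nat" assume \<sigma>: "\<sigma> permutes {..<2*n}"
  then show "\<sigma> permutes {..<2 * Suc n}" by (rule permutes_subset) auto
  show "\<sigma> (2*n) = 2*n" "\<sigma> (2*n+1) = 2*n+1" using permutes_not_in[OF \<sigma>] by auto
next
  fix \<sigma> :: "nat \<Rightarrow> nat" assume "\<sigma> permutes {..<2 * Suc n}" "\<sigma> (2*n) = 2*n" "\<sigma> (2*n+1) = 2*n+1"
  then show "\<sigma> permutes {..<2*n}" by (rule_tac permutes_superset) (auto simp: less_Suc_eq)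
qed

lemma perms_onto_last_pair_last:
  fixes n :: nat
  defines "\<tau> \<equiv> Transposition.transpose (2*n) (2*n+1)"
  shows "perms_onto_last_pair n n = {\<sigma>. \<sigma> permutes {..<2*n}} \<union> (\<lambda>\<sigma>. \<sigma> \<circ> \<tau>) ` {\<sigma>. \<sigma> permutes {..<2*n}}"
proof -
  have \<tau>: "\<tau> permutes {..<2 * Suc n}" unfolding \<tau>_def by (intro permutes_swap_id) auto
  have "\<tau> \<circ> \<tau> = id" unfolding \<tau>_def by simp
  then have \<tau>\<tau>: "\<sigma> \<circ> \<tau> \<circ> \<tau> = \<sigma>" for \<sigma> :: "nat \<Rightarrow> nat" by (simp add: comp_assoc)
  have "\<sigma> \<in> (\<lambda>\<sigma>. \<sigma> \<circ> \<tau>) ` {\<sigma>. \<sigma> permutes {..<2*n}}"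
    if "\<sigma> permutes {..<2 * Suc n}" "\<sigma> (2*n) = 2*n+1" "\<sigma> (2*n+1) = 2*n" for \<sigma>
    using that \<tau>\<tau>[of \<sigma>] permutes_compose[OF \<tau> that(1)] unfolding permutes_fixing_last_pair
    by (intro image_eqI[of _ _ "\<sigma> \<circ> \<tau>"]) (auto simp: \<tau>_def)
  then show ?thesis
    unfolding permutes_fixing_last_pair perms_onto_last_pair_def
    using permutes_compose[OF \<tau>] by (auto simp: \<tau>_def)
qed

lemma sum_perms_onto_last_pair_last:
  assumes skew: "\<And>x y. \<alpha> x y = - \<alpha> y x"
  shows "sum (pfaffian_term \<alpha> (Suc n) v) (perms_onto_last_pair n n)
       = 2 * \<alpha> (v (2*n)) (v (2*n+1)) * (\<Sum>\<sigma> | \<sigma> permutes {..<2*n}. pfaffian_term \<alpha> n v \<sigma>)"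
proof -
  let ?S = "{\<sigma>. \<sigma> permutes {..<2*n}}"
  let ?T = "pfaffian_term \<alpha> (Suc n) v"
  define \<tau> where "\<tau> = Transposition.transpose (2*n) (2*n+1)"
  have term_fix: "?T \<sigma> = pfaffian_term \<alpha> n v \<sigma> * \<alpha> (v (2*n)) (v (2*n+1))" if "\<sigma> \<in> ?S" for \<sigma>
    using that unfolding permutes_fixing_last_pair pfaffian_term_def by (simp add: prod.lessThan_Suc)
  have term_swap: "?T (\<sigma> \<circ> \<tau>) = ?T \<sigma>" if "\<sigma> \<in> ?S" for \<sigma>
  proof -
    have "permutation \<sigma>" using that permutation_permutes by blast
    then have "sign (\<sigma> \<circ> \<tau>) = - sign \<sigma>"
      unfolding \<tau>_def by (simp add: sign_compose permutation_swap_id sign_swap_id)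
    moreover have "(\<Prod>i<n. \<alpha> (v ((\<sigma> \<circ> \<tau>) (2*i))) (v ((\<sigma> \<circ> \<tau>) (2*i+1))))
        = (\<Prod>i<n. \<alpha> (v (\<sigma> (2*i))) (v (\<sigma> (2*i+1))))"
      by (rule prod.cong) (auto simp: \<tau>_def)
    ultimately show ?thesis
      using that skew[of "v (2*n)" "v (2*n+1)"] unfolding permutes_fixing_last_pair pfaffian_term_def
      by (simp add: prod.lessThan_Suc \<tau>_def)
  qed
  have "\<tau> \<circ> \<tau> = id" unfolding \<tau>_def by simp
  then have \<tau>\<tau>: "\<sigma> \<circ> \<tau> \<circ> \<tau> = \<sigma>" for \<sigma> :: "nat \<Rightarrow> nat" by (simp add: comp_assoc)
  have "inj_on (\<lambda>\<sigma>. \<sigma> \<circ> \<tau>) ?S"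
  proof (rule inj_onI)
    fix \<sigma> \<sigma>' :: "nat \<Rightarrow> nat" assume "\<sigma> \<circ> \<tau> = \<sigma>' \<circ> \<tau>"
    then show "\<sigma> = \<sigma>'" by (metis \<tau>\<tau>)
  qed
  moreover have "?S \<inter> (\<lambda>\<sigma>. \<sigma> \<circ> \<tau>) ` ?S = {}" unfolding permutes_fixing_last_pair by (auto simp: \<tau>_def)
  moreover have "finite ?S" by (rule finite_permutations) simp
  ultimately have "sum ?T (perms_onto_last_pair n n) = sum ?T ?S + sum (?T \<circ> (\<lambda>\<sigma>. \<sigma> \<circ> \<tau>)) ?S"
    unfolding perms_onto_last_pair_last \<tau>_def[symmetric] by (simp add: sum.union_disjoint sum.reindex)
  also have "sum (?T \<circ> (\<lambda>\<sigma>. \<sigma> \<circ> \<tau>)) ?S = sum ?T ?S"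
    using term_swap by (intro sum.cong) auto
  also have "sum ?T ?S = \<alpha> (v (2*n)) (v (2*n+1)) * (\<Sum>\<sigma> \<in> ?S. pfaffian_term \<alpha> n v \<sigma>)"
    using term_fix by (simp add: sum_distrib_left mult.commute)
  finally show ?thesis by simp
qed

text \<open>Only permutations that send some pair of slots \<open>2i, 2i+1\<close> onto \<open>2n, 2n+1\<close> contribute; the
  \<open>n+1\<close> choices of \<open>i\<close> give equal sums, and the two orders within the pair cancel the factor \<open>1/2\<close>.\<close>

lemma wedge_power_eval_Suc_orthogonal:
  assumes skew: "\<And>x y. \<alpha> x y = - \<alpha> y x"
    and orth: "\<And>j. j < 2*n \<Longrightarrow> \<alpha> (v j) (v (2*n)) = 0"
  shows "wedge_power_eval \<alpha> (Suc n) v = real (Suc n) * \<alpha> (v (2*n)) (v (2*n+1)) * wedge_power_eval \<alpha> n v"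
proof -
  let ?T = "pfaffian_term \<alpha> (Suc n) v"
  let ?C = "\<Union>i<Suc n. perms_onto_last_pair n i"
  have fin: "finite {\<sigma>. \<sigma> permutes {..<2 * Suc n}}" by (rule finite_permutations) simp
  then have "(\<Sum>\<sigma> | \<sigma> permutes {..<2 * Suc n}. ?T \<sigma>) = sum ?T ?C"
    using pfaffian_term_vanishes[of \<alpha> n v, OF skew orth]
    by (intro sum.mono_neutral_right) (auto simp: perms_onto_last_pair_def)
  also have "\<dots> = (\<Sum>i<Suc n. sum ?T (perms_onto_last_pair n i))"
    using perms_onto_last_pair_disjoint finite_subset[OF _ fin]
    by (intro sum.UNION_disjoint) (auto simp: perms_onto_last_pair_def)
  also have "\<dots> = (\<Sum>i<Suc n. sum ?T (perms_onto_last_pair n n))"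
    using sum_perms_onto_last_pair_eq by (intro sum.cong[OF refl]) auto
  also have "\<dots> = real (Suc n) * (2 * \<alpha> (v (2*n)) (v (2*n+1))
                     * (\<Sum>\<sigma> | \<sigma> permutes {..<2*n}. pfaffian_term \<alpha> n v \<sigma>))"
    using sum_perms_onto_last_pair_last[of \<alpha> n v, OF skew] by simp
  finally show ?thesis unfolding wedge_power_eval_eq_sum_pfaffian_term by simp
qed

lemma wedge_power_eval_Suc_split_pair:
  fixes \<alpha> :: "'v::real_vector \<Rightarrow> 'v \<Rightarrow> real"
  assumes bil: "bilinear \<alpha>" and skew: "\<And>x y. \<alpha> x y = - \<alpha> y x" and "\<alpha> (v (2*n)) (v (2*n+1)) \<noteq> 0"
  shows "wedge_power_eval \<alpha> (Suc n) v = real (Suc n) * \<alpha> (v (2*n)) (v (2*n+1)) *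
    wedge_power_eval \<alpha> n (\<lambda>k. if k < 2*n then skew_compl_proj \<alpha> (v (2*n)) (v (2*n+1)) (v k) else v k)"
proof -
  let ?v' = "\<lambda>k. if k < 2*n then skew_compl_proj \<alpha> (v (2*n)) (v (2*n+1)) (v k) else v k"
  have "elementary_transform (2 * Suc n) v ?v' 1"
    unfolding skew_compl_proj_def
    by (rule elementary_transform_shear_below[OF elementary_transform.ident]) auto
  from wedge_power_eval_elementary_transform[OF this _ bil]
  have "wedge_power_eval \<alpha> (Suc n) ?v' = wedge_power_eval \<alpha> (Suc n) v" by simp
  moreover have "\<alpha> (?v' j) (?v' (2*n)) = 0" if "j < 2*n" for j
    using skew_compl_proj_orthogonal(1)[OF bil skew assms(3)] that by simp
  ultimately show ?thesis using wedge_power_eval_Suc_orthogonal[of \<alpha> n ?v', OF skew] by simp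
qed

section \<open>Leading term of \<open>\<omega>\<^sup>n\<close> at a point of corank 4\<close>

definition pfaffian4 :: "(nat \<Rightarrow> nat \<Rightarrow> real) \<Rightarrow> real" where
  "pfaffian4 H = H 0 1 * H 2 3 - H 0 2 * H 1 3 + H 0 3 * H 1 2"

lemma wedge_power_eval_two:
  assumes skew: "\<And>x y. \<alpha> x y = - \<alpha> y x"
  shows "wedge_power_eval \<alpha> 2 v = 2 * pfaffian4 (\<lambda>j l. \<alpha> (v j) (v l))"
proof -
  have diag: "\<alpha> x x = 0" for x using skew[of x x] by simp
  have four: "{..<2*2::nat} = insert 0 (insert 1 (insert 2 (insert 3 {})))" by auto
  have pairs: "(\<Prod>i<(2::nat). f i) = f 0 * (f 1 :: real)" for f
    by (simp add: numeral_2_eq_2 lessThan_Suc)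
  show ?thesis
    unfolding wedge_power_eval_def four pairs pfaffian4_def
    apply (simp add: sum_over_permutations_insert sign_swap_id permutation_swap_id sign_compose
        permutation_compose Transposition.transpose_def diag)
    apply (simp add: skew[of "v (Suc 0)" "v 0"] skew[of "v 3" "v (Suc 0)"] skew[of "v 2" "v (Suc 0)"]
        skew[of "v 2" "v 0"] skew[of "v 3" "v 0"] skew[of "v 3" "v 2"] algebra_simps)
    done
qed

lemma tendsto_zero_of_tendsto_div:
  fixes f :: "real \<Rightarrow> real"
  assumes "((\<lambda>t. f t / t) \<longlongrightarrow> L) (at 0)"
  shows "(f \<longlongrightarrow> 0) (at 0)"
proof -
  have "((\<lambda>t. t * (f t / t)) \<longlongrightarrow> 0 * L) (at 0)"
    by (rule tendsto_mult[OF tendsto_ident_at assms])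
  moreover have "eventually (\<lambda>t. t * (f t / t) = f t) (at 0)"
    by (simp add: eventually_at_filter)
  ultimately show ?thesis by (simp add: Lim_transform_eventually)
qed

lemma tendsto_skew_compl_proj_quotient:
  fixes \<alpha> :: "real \<Rightarrow> 'v::real_vector \<Rightarrow> 'v \<Rightarrow> real"
  assumes bil: "\<And>t. bilinear (\<alpha> t)" and skew: "\<And>t x y. \<alpha> t x y = - \<alpha> t y x"
    and PQ: "((\<lambda>t. \<alpha> t (P t) (Q t)) \<longlongrightarrow> 1) (at 0)"
    and xP: "((\<lambda>t. \<alpha> t (x t) (P t) / t) \<longlongrightarrow> a) (at 0)" and xQ: "((\<lambda>t. \<alpha> t (x t) (Q t) / t) \<longlongrightarrow> b) (at 0)"
    and yP: "((\<lambda>t. \<alpha> t (y t) (P t) / t) \<longlongrightarrow> a') (at 0)" and yQ: "((\<lambda>t. \<alpha> t (y t) (Q t) / t) \<longlongrightarrow> b') (at 0)"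
    and xy: "((\<lambda>t. (\<alpha> t (x t) (y t) - c) / t) \<longlongrightarrow> L) (at 0)"
  shows "((\<lambda>t. (\<alpha> t (skew_compl_proj (\<alpha> t) (P t) (Q t) (x t)) (skew_compl_proj (\<alpha> t) (P t) (Q t) (y t))
             - c) / t) \<longlongrightarrow> L) (at 0)"
proof -
  have "((\<lambda>t. (\<alpha> t (x t) (y t) - c) / t + (\<alpha> t (x t) (Q t) / t) * \<alpha> t (y t) (P t) / \<alpha> t (P t) (Q t)
      - (\<alpha> t (x t) (P t) / t) * \<alpha> t (y t) (Q t) / \<alpha> t (P t) (Q t)) \<longlongrightarrow> L + b * 0 / 1 - a * 0 / 1) (at 0)"
    by (intro tendsto_intros xy xP xQ PQ tendsto_zero_of_tendsto_div[OF yP] tendsto_zero_of_tendsto_div[OF yQ])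
      simp_all
  then show ?thesis
    unfolding skew_compl_proj_form[OF bil skew] by (simp add: divide_inverse algebra_simps)
qed

lemma tendsto_split_pair_first_order:
  fixes \<alpha> :: "real \<Rightarrow> 'v::real_vector \<Rightarrow> 'v \<Rightarrow> real"
  assumes bil: "\<And>t. bilinear (\<alpha> t)" and skew: "\<And>t x y. \<alpha> t x y = - \<alpha> t y x" and k: "2 \<le> k"
    and lim: "\<And>j l. j < 2*k+2 \<Longrightarrow> l < 2*k+2 \<Longrightarrow>
      ((\<lambda>t. (\<alpha> t (e t j) (e t l) - darboux_form 4 j l) / t) \<longlongrightarrow> H j l) (at 0)"
  shows "((\<lambda>t. \<alpha> t (e t (2*k)) (e t (2*k+1))) \<longlongrightarrow> 1) (at 0)"
    and "\<And>j l. j < 2*k \<Longrightarrow> l < 2*k \<Longrightarrow> ((\<lambda>t. (\<alpha> t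
      (skew_compl_proj (\<alpha> t) (e t (2*k)) (e t (2*k+1)) (e t j))
      (skew_compl_proj (\<alpha> t) (e t (2*k)) (e t (2*k+1)) (e t l)) - darboux_form 4 j l) / t) \<longlongrightarrow> H j l) (at 0)"
proof -
  let ?a = "\<lambda>t j l. \<alpha> t (e t j) (e t l)"
  have form: "darboux_form 4 j (2*k) = 0" "darboux_form 4 j (2*k+1) = 0" "darboux_form 4 (2*k) (2*k+1) = 1"
    if "j < 2*k" for j
    using darboux_form_last_pair[of 4 k] that k by auto
  have lim_p: "((\<lambda>t. ?a t j (2*k) / t) \<longlongrightarrow> H j (2*k)) (at 0)"
    and lim_q: "((\<lambda>t. ?a t j (2*k+1) / t) \<longlongrightarrow> H j (2*k+1)) (at 0)" if "j < 2*k" for j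
    using lim[of j "2*k"] lim[of j "2*k+1"] form[OF that] that by simp_all
  have "((\<lambda>t. ?a t (2*k) (2*k+1) - 1) \<longlongrightarrow> 0) (at 0)"
    using tendsto_zero_of_tendsto_div[OF lim[of "2*k" "2*k+1"]] form[of 0] k by simp
  then show lim_pq: "((\<lambda>t. ?a t (2*k) (2*k+1)) \<longlongrightarrow> 1) (at 0)"
    using tendsto_add_const_iff[of "-1" "\<lambda>t. ?a t (2*k) (2*k+1)" 1] by simp
  show "((\<lambda>t. (\<alpha> t (skew_compl_proj (\<alpha> t) (e t (2*k)) (e t (2*k+1)) (e t j))
      (skew_compl_proj (\<alpha> t) (e t (2*k)) (e t (2*k+1)) (e t l)) - darboux_form 4 j l) / t) \<longlongrightarrow> H j l) (at 0)"
    if "j < 2*k" "l < 2*k" for j l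
    using that by (intro tendsto_skew_compl_proj_quotient[OF bil skew lim_pq lim_p[of j] lim_q[of j]
        lim_p[of l] lim_q[of l] lim[of j l]]) simp_all
qed

lemma tendsto_wedge_power_eval_div_sq:
  fixes \<alpha> :: "real \<Rightarrow> 'v::real_vector \<Rightarrow> 'v \<Rightarrow> real"
  assumes bil: "\<And>t. bilinear (\<alpha> t)" and skew: "\<And>t x y. \<alpha> t x y = - \<alpha> t y x"
    and lim: "\<And>j l. j < 2*m+4 \<Longrightarrow> l < 2*m+4 \<Longrightarrow>
      ((\<lambda>t. (\<alpha> t (e t j) (e t l) - darboux_form 4 j l) / t) \<longlongrightarrow> H j l) (at 0)"
  shows "((\<lambda>t. wedge_power_eval (\<alpha> t) (m+2) (e t) / t^2) \<longlongrightarrow> fact (m+2) * pfaffian4 H) (at 0)"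
  using lim
proof (induction m arbitrary: e)
  case 0
  have "((\<lambda>t. 2 * pfaffian4 (\<lambda>j l. \<alpha> t (e t j) (e t l) / t)) \<longlongrightarrow> 2 * pfaffian4 H) (at 0)"
    unfolding pfaffian4_def using "0.prems" by (intro tendsto_intros) (simp_all add: darboux_form_def)
  moreover have "2 * pfaffian4 (\<lambda>j l. \<alpha> t (e t j) (e t l) / t) = wedge_power_eval (\<alpha> t) 2 (e t) / t^2" for t
    unfolding wedge_power_eval_two[OF skew] pfaffian4_def by (simp add: power2_eq_square divide_inverse algebra_simps)
  ultimately show ?case by (simp add: numeral_2_eq_2)
next
  case (Suc m)
  let ?a = "\<lambda>t. \<alpha> t (e t (2*(m+2))) (e t (2*(m+2)+1))"
  define e' where "e' t = (\<lambda>k. if k < 2*(m+2)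
    then skew_compl_proj (\<alpha> t) (e t (2*(m+2))) (e t (2*(m+2)+1)) (e t k) else e t k)" for t
  note first_order = tendsto_split_pair_first_order[OF bil skew, where k="m+2" and e=e and H=H]
  have "((\<lambda>t. real (Suc (m+2)) * ?a t * (wedge_power_eval (\<alpha> t) (m+2) (e' t) / t^2))
      \<longlongrightarrow> real (Suc (m+2)) * 1 * (fact (m+2) * pfaffian4 H)) (at 0)"
    using Suc.prems first_order
    by (intro tendsto_intros Suc.IH) (auto simp: e'_def algebra_simps)
  moreover have "eventually (\<lambda>t. ?a t \<noteq> 0) (at 0)"
    using tendsto_imp_eventually_ne[OF first_order(1)] Suc.prems by (simp add: algebra_simps)
  then have "eventually (\<lambda>t. real (Suc (m+2)) * ?a t * (wedge_power_eval (\<alpha> t) (m+2) (e' t) / t^2)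
      = wedge_power_eval (\<alpha> t) (Suc m + 2) (e t) / t^2) (at 0)"
  proof eventually_elim
    case (elim t)
    have "Suc m + 2 = Suc (m+2)" by simp
    show ?case unfolding \<open>Suc m + 2 = Suc (m+2)\<close>
        wedge_power_eval_Suc_split_pair[OF bil[of t] skew[of t] elim] e'_def by simp
  qed
  ultimately have "((\<lambda>t. wedge_power_eval (\<alpha> t) (Suc m + 2) (e t) / t^2)
      \<longlongrightarrow> real (Suc (m+2)) * 1 * (fact (m+2) * pfaffian4 H)) (at 0)"
    by (rule Lim_transform_eventually)
  moreover have "real (Suc (m+2)) * 1 * (fact (m+2) * pfaffian4 H) = fact (Suc m + 2) * pfaffian4 H"
    by (simp add: fact_Suc)
  ultimately show ?case by (simp only:)
qed

section \<open>The kernel in a Darboux frame\<close>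

lemma spanning_family_is_basis:
  fixes e :: "nat \<Rightarrow> 'v::euclidean_space"
  assumes "span (e ` {..<N}) = UNIV" "DIM('v) = N"
  shows "inj_on e {..<N}" "independent (e ` {..<N})"
proof -
  have "N = dim (span (e ` {..<N}))" using assms by (simp add: dim_UNIV)
  also have "\<dots> \<le> card (e ` {..<N})" by (simp add: dim_span real_vector.dim_le_card')
  finally have card: "card (e ` {..<N}) = N" using card_image_le[of "{..<N}" e] by simp
  then show "inj_on e {..<N}" by (intro eq_card_imp_inj_on) auto
  show "independent (e ` {..<N})"
    using assms card by (intro card_le_dim_spanning[of _ UNIV]) (auto simp: dim_UNIV)
qed

lemma darboux_form_partner:
  assumes "even s" "s \<le> l" "l < 2*k"
  obtains l' \<epsilon> where "l' < 2*k" "\<epsilon> \<noteq> 0" "\<And>i. darboux_form s i l' = (if i = l then \<epsilon> else 0)"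
proof (cases "even l")
  case True
  with assms show ?thesis
    by (intro that[of "l+1" 1]) (auto simp: darboux_form_def elim!: evenE)
next
  case False
  then obtain a where a: "l = 2*a+1" by (auto elim: oddE)
  have "darboux_form s i (2*a) = (if i = l then -1 else 0)" for i
  proof -
    have "\<not> (even i \<and> 2*a = i+1)" by presburger
    then show ?thesis using assms unfolding darboux_form_def a by (auto elim!: evenE)
  qed
  then show ?thesis using assms a by (intro that[of "2*a" "-1"]) auto
qed

lemma darboux_kernel_subset_span:
  fixes \<alpha> :: "'v::real_vector \<Rightarrow> 'v \<Rightarrow> real"
  assumes bil: "bilinear \<alpha>" and span: "span (e ` {..<2*k}) = UNIV" and inj: "inj_on e {..<2*k}"
    and s: "even s" "s \<le> 2*k"
    and form: "\<And>j l. j < 2*k \<Longrightarrow> l < 2*k \<Longrightarrow> \<alpha> (e j) (e l) = darboux_form s j l"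
    and x: "\<forall>y. \<alpha> x y = 0"
  shows "x \<in> span (e ` {..<s})"
proof -
  have lin_left: "linear (\<lambda>x. \<alpha> x y)" for y using bil unfolding bilinear_def by blast
  obtain u where "x = (\<Sum>v\<in>e ` {..<2*k}. u v *\<^sub>R v)"
    using span real_vector.span_finite[of "e ` {..<2*k}"] by auto
  then have u: "x = (\<Sum>i<2*k. u (e i) *\<^sub>R e i)" using inj by (simp add: sum.reindex)
  have coord: "u (e l) = 0" if l: "s \<le> l" "l < 2*k" for l
  proof -
    obtain l' \<epsilon> where l': "l' < 2*k" "\<epsilon> \<noteq> 0" "\<And>i. darboux_form s i l' = (if i = l then \<epsilon> else 0)"
      by (rule darboux_form_partner[OF s(1) l]) (rule that)
    have "0 = \<alpha> x (e l')" using x by simp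
    also have "\<dots> = (\<Sum>i<2*k. u (e i) * darboux_form s i l')"
      unfolding u using l'(1) form
      by (simp add: linear_sum[OF lin_left] linear_scale[OF lin_left])
    also have "\<dots> = (\<Sum>i<2*k. if i = l then u (e i) * \<epsilon> else 0)"
      unfolding l'(3) by (intro sum.cong) auto
    also have "\<dots> = u (e l) * \<epsilon>" using l by simp
    finally show ?thesis using l'(2) by simp
  qed
  have "x = (\<Sum>i<s. u (e i) *\<^sub>R e i) + (\<Sum>i\<in>{s..<2*k}. u (e i) *\<^sub>R e i)"
    unfolding u using sum.atLeastLessThan_concat[of 0 s "2*k" "\<lambda>i. u (e i) *\<^sub>R e i"] s(2)
    by (simp add: atLeast0LessThan)
  also have "(\<Sum>i\<in>{s..<2*k}. u (e i) *\<^sub>R e i) = 0" using coord by (intro sum.neutral) auto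
  finally have "x = (\<Sum>i<s. u (e i) *\<^sub>R e i)" by simp
  moreover have "(\<Sum>i<s. u (e i) *\<^sub>R e i) \<in> span (e ` {..<s})"
    by (intro real_vector.span_sum real_vector.span_scale real_vector.span_base) simp
  ultimately show ?thesis by simp
qed

lemma kernel_of_darboux_basis:
  fixes \<alpha> :: "'v::euclidean_space \<Rightarrow> 'v \<Rightarrow> real"
  assumes bil: "bilinear \<alpha>" and span: "span (e ` {..<2*k}) = UNIV" and dim: "DIM('v) = 2*k"
    and s: "even s" "s \<le> 2*k"
    and form: "\<And>j l. j < 2*k \<Longrightarrow> l < 2*k \<Longrightarrow> \<alpha> (e j) (e l) = darboux_form s j l"
  shows "{x. \<forall>y. \<alpha> x y = 0} = span (e ` {..<s})" "dim {x. \<forall>y. \<alpha> x y = 0} = s"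
proof -
  note basis = spanning_family_is_basis[OF span dim]
  have lin_right: "linear (\<alpha> x)" for x using bil unfolding bilinear_def by blast
  have "subspace {x. \<forall>y. \<alpha> x y = 0}"
    using bil by (auto simp: subspace_def bilinear_ladd bilinear_lmul bilinear_lzero)
  moreover have "e j \<in> {x. \<forall>y. \<alpha> x y = 0}" if "j < s" for j
  proof -
    have "\<alpha> (e j) z = 0" if "z \<in> e ` {..<2*k}" for z
      using that form \<open>j < s\<close> s by (auto simp: darboux_form_def)
    then have "\<alpha> (e j) y = 0" if "y \<in> span (e ` {..<2*k})" for y
      using real_vector.linear_eq_0_on_span[OF lin_right _ that] by blast
    then show ?thesis using span by simp
  qed
  ultimately have "span (e ` {..<s}) \<subseteq> {x. \<forall>y. \<alpha> x y = 0}"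
    by (intro real_vector.span_minimal) auto
  moreover have "x \<in> span (e ` {..<s})" if "\<forall>y. \<alpha> x y = 0" for x
    using darboux_kernel_subset_span[OF bil span basis(1) s form that] .
  ultimately show K: "{x. \<forall>y. \<alpha> x y = 0} = span (e ` {..<s})" by blast
  have "independent (e ` {..<s})"
    by (rule real_vector.independent_mono[OF basis(2)]) (use s(2) in auto)
  moreover have "card (e ` {..<s}) = s"
    using inj_on_subset[OF basis(1), of "{..<s}"] s(2) by (simp add: card_image)
  ultimately show "dim {x. \<forall>y. \<alpha> x y = 0} = s"
    unfolding K dim_span by (simp add: real_vector.dim_eq_card_independent)
qed

section \<open>Forms in a chart\<close>

lemma bilinear_form_at: "bilinear (form_at W x)"
  unfolding bilinear_def form_at_def
  by (simp add: bounded_linear.linear[OF bounded_linear_inner_left] linear_compose[OF matrix_vector_mul_linear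
        bounded_linear.linear[OF bounded_linear_inner_right], unfolded o_def])

lemma inner_matrix_vector_skew:
  fixes M :: "real^'n^'n"
  assumes "transpose M = - M"
  shows "a \<bullet> (M *v b) = - (b \<bullet> (M *v a))"
proof -
  have neg: "(- M) *v a = - (M *v a)" by (simp add: matrix_vector_mult_def vec_eq_iff sum_negf)
  have "a \<bullet> (M *v b) = (transpose M *v a) \<bullet> b" by (simp add: dot_lmul_matrix)
  also have "\<dots> = - (b \<bullet> (M *v a))" unfolding assms neg by (simp add: inner_commute)
  finally show ?thesis .
qed

lemma tendsto_form_at_difference_quotient:
  assumes W': "(W has_derivative W') (at p)"
  shows "((\<lambda>t. (form_at W (p + t *\<^sub>R v) x y - form_at W p x y) / t) \<longlongrightarrow> x \<bullet> (W' v *v y)) (at 0)"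
proof -
  have "linear (\<lambda>M. x \<bullet> (M *v y))"
    by (rule linearI) (simp_all add: matrix_vector_mult_add_rdistrib inner_add_right
        scaleR_matrix_vector_assoc[symmetric])
  then have evaluation: "bounded_linear (\<lambda>M. x \<bullet> (M *v y))"
    by (simp add: linear_conv_bounded_linear)
  have line: "((\<lambda>t::real. p + t *\<^sub>R v) has_derivative (\<lambda>t. t *\<^sub>R v)) (at 0)"
    by (auto intro!: derivative_eq_intros)
  have "(W \<circ> (\<lambda>t. p + t *\<^sub>R v) has_derivative W' \<circ> (\<lambda>t. t *\<^sub>R v)) (at 0)"
    by (rule diff_chain_at[OF line]) (use W' in simp)
  then have "((\<lambda>t. x \<bullet> ((W \<circ> (\<lambda>t. p + t *\<^sub>R v)) t *v y))
      has_derivative (\<lambda>t. x \<bullet> ((W' \<circ> (\<lambda>t. t *\<^sub>R v)) t *v y))) (at 0)"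
    by (rule bounded_linear.has_derivative[OF evaluation])
  moreover have "(\<lambda>t. x \<bullet> ((W' \<circ> (\<lambda>t. t *\<^sub>R v)) t *v y)) = (*) (x \<bullet> (W' v *v y))"
    using linear_scale[OF has_derivative_linear[OF W']]
    by (auto simp: fun_eq_iff scaleR_matrix_vector_assoc[symmetric])
  ultimately have "((\<lambda>t. form_at W (p + t *\<^sub>R v) x y) has_field_derivative x \<bullet> (W' v *v y)) (at 0)"
    unfolding has_field_derivative_def form_at_def by (simp add: o_def)
  then show ?thesis unfolding DERIV_def form_at_def by simp
qed

lemma eventually_line_in_open:
  fixes p :: "'a::real_normed_vector"
  assumes "open U" "p \<in> U"
  shows "eventually (\<lambda>t::real. p + t *\<^sub>R v \<in> U) (at 0)"
proof -
  have "((\<lambda>t::real. p + t *\<^sub>R v) \<longlongrightarrow> p + 0 *\<^sub>R v) (at 0)"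
    by (intro tendsto_intros)
  then show ?thesis using assms topological_tendstoD by fastforce
qed

lemma form_at_skew: "transpose (W x) = - W x \<Longrightarrow> form_at W x a b = - form_at W x b a"
  unfolding form_at_def by (rule inner_matrix_vector_skew)

lemma derivative_form_at_skew:
  fixes W :: "real^'n \<Rightarrow> real^'n^'n"
  assumes "open U" "p \<in> U" "(W has_derivative W') (at p)" "\<forall>x\<in>U. transpose (W x) = - W x"
  shows "x \<bullet> (W' v *v y) = - (y \<bullet> (W' v *v x))"
proof -
  have "eventually (\<lambda>t. - ((form_at W (p + t *\<^sub>R v) y x - form_at W p y x) / t)
      = (form_at W (p + t *\<^sub>R v) x y - form_at W p x y) / t) (at 0)"
    using eventually_line_in_open[OF assms(1,2), of v]
  proof eventually_elim
    case (elim t)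
    then have "form_at W (p + t *\<^sub>R v) y x - form_at W p y x
        = - (form_at W (p + t *\<^sub>R v) x y - form_at W p x y)"
      using assms(2,4) form_at_skew[of W _ y x] by simp
    then show ?case by (simp add: minus_divide_left)
  qed
  then have "((\<lambda>t. (form_at W (p + t *\<^sub>R v) x y - form_at W p x y) / t) \<longlongrightarrow> - (y \<bullet> (W' v *v x))) (at 0)"
    using tendsto_minus[OF tendsto_form_at_difference_quotient[OF assms(3), of v y x]]
    by (rule Lim_transform_eventually[rotated])
  then show ?thesis
    using tendsto_form_at_difference_quotient[OF assms(3), of v x y] tendsto_unique[OF trivial_limit_at] by blast
qed

lemma bilinear_zero: "bilinear (\<lambda>_ _. 0 :: real)"
  by (simp add: bilinear_def linear_zero)

text \<open>Along the line \<open>p + t v\<close>, \<open>\<omega>\<^sup>n\<close> evaluated on the oriented basis is \<open>\<ge> 0\<close> and, by the frame change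
  to the Darboux basis \<open>e\<close>, equals \<open>(n! / c) Pf(H v) t\<^sup>2 + o(t\<^sup>2)\<close>.\<close>

lemma near_positive_pfaffian_sign:
  fixes W :: "real^'n \<Rightarrow> real^'n^'n"
  assumes U: "open U" "p \<in> U" and W': "(W has_derivative W') (at p)"
    and skew: "\<forall>x\<in>U. transpose (W x) = - W x"
    and np: "near_positive (m+2) b U W" and et: "elementary_transform (2*(m+2)) b e c"
    and form: "\<And>j l. j < 2*(m+2) \<Longrightarrow> l < 2*(m+2) \<Longrightarrow> form_at W p (e j) (e l) = darboux_form 4 j l"
  shows "0 \<le> pfaffian4 (\<lambda>j l. e j \<bullet> (W' v *v e l)) / c"
proof -
  let ?P = "pfaffian4 (\<lambda>j l. e j \<bullet> (W' v *v e l))"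
  \<comment> \<open>off \<open>U\<close> the form is replaced by \<open>0\<close>; only small \<open>t\<close> matter\<close>
  define \<alpha> where "\<alpha> t = (if p + t *\<^sub>R v \<in> U then form_at W (p + t *\<^sub>R v) else (\<lambda>_ _. 0))" for t :: real
  have bil: "bilinear (\<alpha> t)" for t
    unfolding \<alpha>_def by (simp add: bilinear_form_at bilinear_zero)
  have skew_\<alpha>: "\<alpha> t x y = - \<alpha> t y x" for t x y
    using skew form_at_skew[of W "p + t *\<^sub>R v" x y] unfolding \<alpha>_def by auto
  have "((\<lambda>t. (\<alpha> t (e j) (e l) - darboux_form 4 j l) / t) \<longlongrightarrow> e j \<bullet> (W' v *v e l)) (at 0)"
    if "j < 2*m+4" "l < 2*m+4" for j l
  proof (rule Lim_transform_eventually[OF tendsto_form_at_difference_quotient[OF W']])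
    show "eventually (\<lambda>t. (form_at W (p + t *\<^sub>R v) (e j) (e l) - form_at W p (e j) (e l)) / t
        = (\<alpha> t (e j) (e l) - darboux_form 4 j l) / t) (at 0)"
      using eventually_line_in_open[OF U, of v] by eventually_elim (use form that in \<open>simp add: \<alpha>_def\<close>)
  qed
  then have "((\<lambda>t. wedge_power_eval (\<alpha> t) (m+2) e / t^2 / c) \<longlongrightarrow> fact (m+2) * ?P / c) (at 0)"
    by (intro tendsto_divide[OF tendsto_wedge_power_eval_div_sq[OF bil skew_\<alpha>] tendsto_const])
      (use elementary_transform_factor_nonzero[OF et] in auto)
  moreover have "wedge_power_eval (\<alpha> t) (m+2) e / t^2 / c = wedge_power_eval (\<alpha> t) (m+2) b / t^2" for t
    using wedge_power_eval_elementary_transform[OF et _ bil] elementary_transform_factor_nonzero[OF et]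
    by simp
  ultimately have lim: "((\<lambda>t. wedge_power_eval (\<alpha> t) (m+2) b / t^2) \<longlongrightarrow> fact (m+2) * ?P / c) (at 0)"
    by (simp only:)
  have "eventually (\<lambda>t. 0 \<le> wedge_power_eval (\<alpha> t) (m+2) b / t^2) (at 0)"
    using eventually_line_in_open[OF U, of v]
    by eventually_elim (use np in \<open>simp add: \<alpha>_def near_positive_def\<close>)
  from tendsto_lowerbound[OF lim this trivial_limit_at] have "0 \<le> fact (m+2) * (?P / c)"
    by (simp only: times_divide_eq_right)
  then show ?thesis by (metis fact_gt_zero zero_le_mult_iff not_le)
qed

section \<open>Semidefinite Pfaffians and the rank of \<open>D\<^sub>K\<close>\<close>

lemma exists_nonzero_in_kernel:
  fixes g :: "'a::euclidean_space \<Rightarrow> 'b::euclidean_space"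
  assumes g: "linear g" and K: "subspace K" "DIM('b) < dim K"
  obtains v where "v \<in> K" "v \<noteq> 0" "g v = 0"
proof (rule ccontr)
  assume "\<not> thesis"
  then have kernel: "v \<in> K \<Longrightarrow> g v = 0 \<Longrightarrow> v = 0" for v using that by blast
  have "inj_on g (span K)"
  proof (rule inj_onI)
    fix x y assume "x \<in> span K" "y \<in> span K" "g x = g y"
    moreover have "span K = K" using K(1) by (simp add: span_eq_iff)
    ultimately have "x - y \<in> K" using subspace_diff[OF K(1)] by simp
    then show "x = y" using kernel[of "x - y"] \<open>g x = g y\<close> linear_diff[OF g] by simp
  qed
  then have "dim (g ` K) = dim K" by (rule dim_image_eq[OF g])
  with dim_subset_UNIV[of "g ` K"] K(2) show False by simp
qed

lemma pfaffian4_anti_self_dual: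
  assumes "\<epsilon> * \<epsilon> = 1" "H 0 1 + \<epsilon> * H 2 3 = 0" "H 0 2 - \<epsilon> * H 1 3 = 0" "H 0 3 + \<epsilon> * H 1 2 = 0"
  shows "pfaffian4 H = - \<epsilon> * ((H 0 1)\<^sup>2 + (H 0 2)\<^sup>2 + (H 0 3)\<^sup>2)"
proof -
  have solve: "z = \<epsilon> * w" if "\<epsilon> * z = w" for z w
    by (simp add: that[symmetric] mult.assoc[symmetric] assms(1))
  have "H 2 3 = - \<epsilon> * H 0 1" "H 1 3 = \<epsilon> * H 0 2" "H 1 2 = - \<epsilon> * H 0 3"
    using solve[of "H 2 3" "- H 0 1"] solve[of "H 1 3" "H 0 2"] solve[of "H 1 2" "- H 0 3"] assms(2-4)
    by simp_all
  then show ?thesis unfolding pfaffian4_def by (simp add: power2_eq_square algebra_simps)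
qed

text \<open>A 4-dimensional space of skew forms on \<open>\<real>\<^sup>4\<close> on which the Pfaffian is semidefinite meets the
  3-dimensional space of (anti-)self-dual forms of the opposite sign nontrivially.\<close>

lemma semidefinite_pfaffian4_degenerate:
  fixes H :: "'a::euclidean_space \<Rightarrow> nat \<Rightarrow> nat \<Rightarrow> real"
  assumes K: "subspace K" "dim K = 4"
    and lin: "\<And>j l. linear (\<lambda>v. H v j l)" and skew: "\<And>v j l. H v j l = - H v l j"
    and sign: "\<sigma> \<noteq> 0" "\<And>v. v \<in> K \<Longrightarrow> 0 \<le> \<sigma> * pfaffian4 (H v)"
  obtains v where "v \<in> K" "v \<noteq> 0" "\<And>j l. j < 4 \<Longrightarrow> l < 4 \<Longrightarrow> H v j l = 0"
proof -
  define \<epsilon> where "\<epsilon> = sgn \<sigma>"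
  define g where "g v = (H v 0 1 + \<epsilon> * H v 2 3, H v 0 2 - \<epsilon> * H v 1 3, H v 0 3 + \<epsilon> * H v 1 2)" for v
  have "linear g"
    by (rule linearI) (simp_all add: g_def linear_add[OF lin] linear_scale[OF lin] algebra_simps)
  moreover have "DIM(real \<times> real \<times> real) < dim K" using K(2) by simp
  ultimately obtain v where v: "v \<in> K" "v \<noteq> 0" "g v = 0"
    by (rule exists_nonzero_in_kernel[OF _ K(1)]) (rule that)
  have \<epsilon>: "\<epsilon> * \<epsilon> = 1" "\<sigma> * \<epsilon> > 0" unfolding \<epsilon>_def using sign(1) by (auto simp: sgn_if)
  have g0: "H v 0 1 + \<epsilon> * H v 2 3 = 0" "H v 0 2 - \<epsilon> * H v 1 3 = 0" "H v 0 3 + \<epsilon> * H v 1 2 = 0"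
    using v(3) unfolding g_def by (simp_all add: zero_prod_def)
  have "(\<sigma> * \<epsilon>) * ((H v 0 1)\<^sup>2 + (H v 0 2)\<^sup>2 + (H v 0 3)\<^sup>2) = - (\<sigma> * pfaffian4 (H v))"
    unfolding pfaffian4_anti_self_dual[OF \<epsilon>(1) g0] by (simp add: algebra_simps)
  then have "(\<sigma> * \<epsilon>) * ((H v 0 1)\<^sup>2 + (H v 0 2)\<^sup>2 + (H v 0 3)\<^sup>2) \<le> 0"
    using sign(2)[OF v(1)] by linarith
  then have "(H v 0 1)\<^sup>2 + (H v 0 2)\<^sup>2 + (H v 0 3)\<^sup>2 \<le> 0"
    using \<epsilon>(2) mult_le_cancel_left_pos[of "\<sigma> * \<epsilon>" _ 0] by simp
  then have "(H v 0 1)\<^sup>2 = 0" "(H v 0 2)\<^sup>2 = 0" "(H v 0 3)\<^sup>2 = 0"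
    using zero_le_power2[of "H v 0 1"] zero_le_power2[of "H v 0 2"] zero_le_power2[of "H v 0 3"]
    by linarith+
  then have row0: "H v 0 1 = 0" "H v 0 2 = 0" "H v 0 3 = 0" by simp_all
  then have rest: "H v 2 3 = 0" "H v 1 3 = 0" "H v 1 2 = 0" using g0 \<epsilon>(1) by auto
  have diag: "H v j j = 0" for j using skew[of v j j] by simp
  have "H v j l = 0" if "j < 4" "l < 4" for j l
  proof -
    have "j = 0 \<or> j = 1 \<or> j = 2 \<or> j = 3" "l = 0 \<or> l = 1 \<or> l = 2 \<or> l = 3" using that by auto
    then show ?thesis using row0 rest diag skew[of v 1 0] skew[of v 2 0] skew[of v 3 0] skew[of v 2 1]
        skew[of v 3 1] skew[of v 3 2] by auto
  qed
  then show ?thesis using v that by blast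
qed

lemma dim_image_less_of_kernel_vector:
  fixes D :: "'a::euclidean_space \<Rightarrow> 'b::ab_group_add"
  assumes D: "Vector_Spaces.linear (*\<^sub>R) s D" and K: "subspace K" "v \<in> K" "v \<noteq> 0" and "D v = 0"
  shows "vector_space.dim s (D ` K) < dim K"
proof -
  interpret D: Vector_Spaces.linear "(*\<^sub>R)" s D by (rule D)
  obtain B where B: "{v} \<subseteq> B" "B \<subseteq> K" "independent B" "K \<subseteq> span B"
    using real_vector.maximal_independent_subset_extend[of "{v}" K] K by (auto simp: dependent_single)
  have "finite B" using finiteI_independent[OF B(3)] .
  have "D x \<in> D.vs2.span (D ` (B - {v}))" if "x \<in> span B" for x
    using that
  proof (rule real_vector.span_induct)
    show "subspace {x. D x \<in> D.vs2.span (D ` (B - {v}))}"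
      unfolding real_vector.subspace_def
      by (simp add: D.zero D.add D.scale D.vs2.span_zero D.vs2.span_add D.vs2.span_scale)
    fix y assume "y \<in> B"
    then show "D y \<in> D.vs2.span (D ` (B - {v}))"
      using \<open>D v = 0\<close> by (cases "y = v") (auto intro: D.vs2.span_base D.vs2.span_zero)
  qed
  then have "D ` K \<subseteq> D.vs2.span (D ` (B - {v}))" using B(4) by auto
  then have "D.vs2.dim (D ` K) \<le> card (D ` (B - {v}))"
    using \<open>finite B\<close> by (intro D.vs2.dim_le_card) auto
  also have "\<dots> \<le> card (B - {v})" using \<open>finite B\<close> by (intro card_image_le) auto
  also have "\<dots> < card B" using \<open>finite B\<close> B(1) by (intro card_Diff1_less) auto
  also have "\<dots> = dim K" using B by (intro basis_card_eq_dim)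
  finally show ?thesis .
qed

lemma vector_space_fscale: "vector_space (fscale :: real \<Rightarrow> ('v \<Rightarrow> 'v \<Rightarrow> real) \<Rightarrow> _)"
  by unfold_locales (auto simp: fscale_def fun_eq_iff algebra_simps)

lemma linear_intrinsic_gradient:
  assumes "W differentiable (at p)"
  shows "Vector_Spaces.linear (*\<^sub>R) fscale (intrinsic_gradient W p)"
proof -
  have "linear (frechet_derivative W (at p))"
    using assms frechet_derivative_works has_derivative_linear by blast
  then show ?thesis
    unfolding linear_iff_module_hom module_hom_iff module_iff_vector_space
    using vector_space_fscale real_vector.vector_space_axioms
    by (auto simp: intrinsic_gradient_def fscale_def fun_eq_iff linear_add linear_scale
        matrix_vector_mult_add_rdistrib inner_add_right scaleR_matrix_vector_assoc[symmetric])
qed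

lemma darboux_frame_at:
  fixes W :: "real^'m \<Rightarrow> real^'m^'m"
  assumes "CARD('m) = 2*n" "transpose (W p) = - W p" "ordered_basis (2*n) b" "dim (kernel_at W p) = s"
  obtains e c where "elementary_transform (2*n) b e c" "kernel_at W p = span (e ` {..<s})"
    "\<And>j l. j < 2*n \<Longrightarrow> l < 2*n \<Longrightarrow> form_at W p (e j) (e l) = darboux_form s j l"
proof -
  have "form_at W p x y = - form_at W p y x" for x y using assms(2) by (rule form_at_skew)
  then obtain e c r where "r \<le> n" and et: "elementary_transform (2*n) b e c"
    and form: "\<forall>j<2*n. \<forall>l<2*n. form_at W p (e j) (e l) = darboux_form (2*n - 2*r) j l"
    using darboux_normal_form[OF bilinear_form_at] by blast
  have span: "span (e ` {..<2*n}) = UNIV"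
    using span_elementary_transform[OF et] assms(3) by (simp add: ordered_basis_def)
  have "kernel_at W p = span (e ` {..<2*n - 2*r})" "dim (kernel_at W p) = 2*n - 2*r"
    unfolding kernel_at_def using form assms(1)
    by (intro kernel_of_darboux_basis[OF bilinear_form_at span]; simp)+
  with et form assms(4) show ?thesis by (intro that) auto
qed

lemma differentiable_at_of_smooth_on:
  assumes "open U" "p \<in> U" "smooth_on U W"
  shows "W differentiable (at p)"
proof -
  have "Ck_on (Suc 0) U W" using assms(3) unfolding smooth_on_def by blast
  then show ?thesis using differentiable_on_eq_differentiable_at[OF assms(1)] assms(2) by auto
qed

lemma linear_inner_matrix_vector:
  fixes f :: "'a::real_vector \<Rightarrow> real^'n^'n"
  assumes "linear f"
  shows "linear (\<lambda>v. x \<bullet> (f v *v y))"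
  using linear_add[OF assms] linear_scale[OF assms]
  by (intro linearI) (simp_all add: matrix_vector_mult_add_rdistrib inner_add_right
      scaleR_matrix_vector_assoc[symmetric])

lemma intrinsic_gradient_eq_0I:
  assumes "kernel_at W p = span E"
    and "\<And>a b. a \<in> E \<Longrightarrow> b \<in> E \<Longrightarrow> a \<bullet> (frechet_derivative W (at p) v *v b) = 0"
  shows "intrinsic_gradient W p v = 0"
proof -
  have "a \<bullet> (frechet_derivative W (at p) v *v b) = 0" if "a \<in> span E" "b \<in> span E" for a b
    using bilinear_eq[OF bilinear_form_at[of "\<lambda>_. frechet_derivative W (at p) v" p, unfolded form_at_def]
        bilinear_zero order.refl order.refl that] assms(2) by auto
  then show ?thesis using assms(1) by (auto simp: intrinsic_gradient_def fun_eq_iff)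
qed

theorem lemma2p1:
  fixes W :: "real^'m \<Rightarrow> real^'m^'m" and U :: "(real^'m) set" and p :: "real^'m"
    and n :: nat and b :: "nat \<Rightarrow> real^'m"
  assumes "CARD('m) = 2 * n"
    and "open U" and "p \<in> U"
    and "smooth_on U W"
    and "\<forall>x\<in>U. transpose (W x) = - W x"
    and "ordered_basis (2 * n) b"
    and "near_positive n b U W"
    and "dim (kernel_at W p) = 4"
  shows "intrinsic_gradient_rank W p \<le> 3"
proof -
  let ?K = "kernel_at W p" and ?D = "frechet_derivative W (at p)"
  have "transpose (W p) = - W p" using assms(3,5) by blast
  then obtain e c where et: "elementary_transform (2*n) b e c" and K: "?K = span (e ` {..<4})"
    and form: "\<And>j l. j < 2*n \<Longrightarrow> l < 2*n \<Longrightarrow> form_at W p (e j) (e l) = darboux_form 4 j l"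
    by (rule darboux_frame_at[OF assms(1) _ assms(6,8)]) (rule that)
  define m where "m = n - 2"
  have n: "n = m + 2" using dim_subset_UNIV_cart[of ?K] assms(1,8) unfolding m_def by simp
  have D: "W differentiable (at p)" by (rule differentiable_at_of_smooth_on[OF assms(2-4)])
  then have W': "(W has_derivative ?D) (at p)" using frechet_derivative_works by blast
  let ?H = "\<lambda>v j l. e j \<bullet> (?D v *v e l)"
  have "0 \<le> inverse c * pfaffian4 (?H v)" if "v \<in> ?K" for v
    using near_positive_pfaffian_sign[OF assms(2,3) W' assms(5), of m b e c v] assms(7) et form n
    by (simp add: divide_inverse mult.commute)
  moreover have "inverse c \<noteq> 0" using elementary_transform_factor_nonzero[OF et] by simp
  ultimately obtain v where v: "v \<in> ?K" "v \<noteq> 0" "\<And>j l. j < 4 \<Longrightarrow> l < 4 \<Longrightarrow> ?H v j l = 0"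
    using semidefinite_pfaffian4_degenerate[of ?K ?H "inverse c"] assms(8) K subspace_span
      linear_inner_matrix_vector[OF has_derivative_linear[OF W']]
      derivative_form_at_skew[OF assms(2,3) W' assms(5)] by metis
  have "intrinsic_gradient W p v = 0" using K v(3) by (intro intrinsic_gradient_eq_0I) auto
  then show ?thesis
    using dim_image_less_of_kernel_vector[OF linear_intrinsic_gradient[OF D] _ v(1,2)] K assms(8)
    unfolding intrinsic_gradient_rank_def by (simp add: subspace_span)
qed

end
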